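(* Let $\mathcal{F}:\mathcal{T}^Y\to\mathcal{T}^Z$ be a cover between trees of spheres. Then every critical vertex of $T^Y$ lies on a path connecting two critical leaves, and every vertex on this path is critical.
   Context: Trees are finite connected graphs without cycles (vertex set $V$, edges $2$-element subsets of $V$, $E_v$ the set of edges containing $v$); leaves are vertices of valence $1$, the others are internal vertices ($IV$). Between two vertices there is a unique path (alternating sequence of distinct vertices and edges, consecutive ones incident). A tree of spheres $\mathcal{T}^X$ marked by a finite set $X$ ($\ge3$ elements) consists of a tree $T^X$ whose leaf set is $X$ and, for each internal vertex $v$, a topological $2$-sphere $\mathcal{S}_v$ and an injection $i_v:E_v\to\mathcal{S}_v$; $X_v:=i_v(E_v)$. A cover $\mathcal{F}:\mathcal{T}^Y\to\mathcal{T}^Z$ consists of a map $F:T^Y\to T^Z$ sending vertices to vertices and each edge $\{v,w\}$ to the edge $\{F(v),F(w)\}$, with $F(Y)\subseteq Z$, $F(IV^Y)\subseteq IV^Z$, and for each $v\in IV^Y$, $w=F(v)$, a topological branched covering $f_v:\mathcal{S}_v\to\mathcal{S}_w$ such that $f_v:\mathcal{S}_v\setminus Y_v\to\mathcal{S}_w\setminus Z_w$ is a covering map, $f_v\circ i_v=i_w\circ F$ on $E_v$, and for an edge $e=\{v_1,v_2\}$ between internal vertices $\deg_{i_{v_1}(e)}f_{v_1}=\deg_{i_{v_2}(e)}f_{v_2}$. Degrees: $\deg(v)=\deg f_v$ for internal $v$; for a leaf $y$ joined by the edge $e$ to the internal vertex $v$, $\deg(y)=\deg_{i_v(e)}f_v$.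 A critical vertex (resp. critical leaf) is a vertex (resp. leaf) of $T^Y$ of degree $>1$. *)

theory Defs
  imports "HOL-Analysis.Analysis"
begin

definition graph :: "'v set \<Rightarrow> 'v set set \<Rightarrow> bool" where
  "graph V E \<longleftrightarrow> finite V \<and> (\<forall>e\<in>E. \<exists>a b. a \<noteq> b \<and> e = {a, b} \<and> a \<in> V \<and> b \<in> V)"

text \<open>A path: a nonempty list of distinct vertices, consecutive ones joined by an edge
  (the edges of the path are then determined by the vertices).\<close>

definition vpath :: "'v set set \<Rightarrow> 'v list \<Rightarrow> bool" where
  "vpath E xs \<longleftrightarrow> xs \<noteq> [] \<and> distinct xs \<and> (\<forall>i. Suc i < length xs \<longrightarrow> {xs ! i, xs ! Suc i} \<in> E)"

definition path_between :: "'v set set \<Rightarrow> 'v \<Rightarrow> 'v \<Rightarrow> 'v list \<Rightarrow> bool" where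
  "path_between E a b xs \<longleftrightarrow> vpath E xs \<and> hd xs = a \<and> last xs = b"

definition graph_connected :: "'v set \<Rightarrow> 'v set set \<Rightarrow> bool" where
  "graph_connected V E \<longleftrightarrow> (\<forall>a\<in>V. \<forall>b\<in>V. \<exists>xs. path_between E a b xs)"

definition has_cycle :: "'v set set \<Rightarrow> bool" where
  "has_cycle E \<longleftrightarrow> (\<exists>xs. vpath E xs \<and> 3 \<le> length xs \<and> {last xs, hd xs} \<in> E)"

definition is_tree :: "'v set \<Rightarrow> 'v set set \<Rightarrow> bool" where
  "is_tree V E \<longleftrightarrow> graph V E \<and> V \<noteq> {} \<and> graph_connected V E \<and> \<not> has_cycle E"

definition edges_at :: "'v set set \<Rightarrow> 'v \<Rightarrow> 'v set set" where
  "edges_at E v = {e \<in> E. v \<in> e}"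

definition leaves :: "'v set \<Rightarrow> 'v set set \<Rightarrow> 'v set" where
  "leaves V E = {v \<in> V. card (edges_at E v) = 1}"

definition internal :: "'v set \<Rightarrow> 'v set set \<Rightarrow> 'v set" where
  "internal V E = V - leaves V E"

definition branched_at ::
  "(real^3) set \<Rightarrow> (real^3) set \<Rightarrow> (real^3 \<Rightarrow> real^3) \<Rightarrow> real^3 \<Rightarrow> nat \<Rightarrow> bool" where
  "branched_at S T f p d \<longleftrightarrow>
     (\<exists>U W \<phi> \<phi>' \<psi> \<psi>'. openin (top_of_set S) U \<and> p \<in> U \<and> openin (top_of_set T) W \<and> f ` U = W \<and>
        homeomorphism U (ball (0::complex) 1) \<phi> \<phi>' \<and> homeomorphism W (ball (0::complex) 1) \<psi> \<psi>' \<and>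
        \<phi> p = 0 \<and> \<psi> (f p) = 0 \<and> (\<forall>x\<in>U. \<psi> (f x) = (\<phi> x) ^ d))"

definition branched_covering :: "(real^3) set \<Rightarrow> (real^3) set \<Rightarrow> (real^3 \<Rightarrow> real^3) \<Rightarrow> bool" where
  "branched_covering S T f \<longleftrightarrow> continuous_on S f \<and> f ` S = T \<and>
     (\<forall>p\<in>S. \<exists>d>0. branched_at S T f p d)"

definition local_degree :: "(real^3) set \<Rightarrow> (real^3) set \<Rightarrow> (real^3 \<Rightarrow> real^3) \<Rightarrow> real^3 \<Rightarrow> nat" where
  "local_degree S T f p = (THE d. 0 < d \<and> branched_at S T f p d)"

definition branched_degree :: "(real^3) set \<Rightarrow> (real^3) set \<Rightarrow> (real^3 \<Rightarrow> real^3) \<Rightarrow> nat" where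
  "branched_degree S T f = (THE n. \<exists>B. finite B \<and> (\<forall>q\<in>T - B. card (S \<inter> f -` {q}) = n))"

text \<open>S v is the sphere at the internal vertex v, i v the injection of the edges at v.\<close>

definition tree_of_spheres ::
  "'v set \<Rightarrow> 'v set set \<Rightarrow> 'v set \<Rightarrow> ('v \<Rightarrow> (real^3) set) \<Rightarrow> ('v \<Rightarrow> 'v set \<Rightarrow> real^3) \<Rightarrow> bool" where
  "tree_of_spheres V E X S i \<longleftrightarrow> is_tree V E \<and> leaves V E = X \<and> 3 \<le> card X \<and>
     (\<forall>v\<in>internal V E. S v homeomorphic sphere (0::real^3) 1 \<and>
        inj_on (i v) (edges_at E v) \<and> i v ` edges_at E v \<subseteq> S v)"

definition marked :: "'v set set \<Rightarrow> ('v \<Rightarrow> 'v set \<Rightarrow> real^3) \<Rightarrow> 'v \<Rightarrow> (real^3) set" where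
  "marked E i v = i v ` edges_at E v"

definition is_cover ::
  "'v set \<Rightarrow> 'v set set \<Rightarrow> 'v set \<Rightarrow> ('v \<Rightarrow> (real^3) set) \<Rightarrow> ('v \<Rightarrow> 'v set \<Rightarrow> real^3) \<Rightarrow>
   'w set \<Rightarrow> 'w set set \<Rightarrow> 'w set \<Rightarrow> ('w \<Rightarrow> (real^3) set) \<Rightarrow> ('w \<Rightarrow> 'w set \<Rightarrow> real^3) \<Rightarrow>
   ('v \<Rightarrow> 'w) \<Rightarrow> ('v \<Rightarrow> real^3 \<Rightarrow> real^3) \<Rightarrow> bool" where
  "is_cover VY EY Y SY iY VZ EZ Z SZ iZ F f \<longleftrightarrow>
     tree_of_spheres VY EY Y SY iY \<and> tree_of_spheres VZ EZ Z SZ iZ \<and>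
     F ` VY \<subseteq> VZ \<and>
     (\<forall>a b. {a, b} \<in> EY \<longrightarrow> {F a, F b} \<in> EZ) \<and>
     F ` Y \<subseteq> Z \<and> F ` internal VY EY \<subseteq> internal VZ EZ \<and>
     (\<forall>v\<in>internal VY EY.
        branched_covering (SY v) (SZ (F v)) (f v) \<and>
        covering_space (SY v - marked EY iY v) (f v) (SZ (F v) - marked EZ iZ (F v)) \<and>
        (\<forall>e\<in>edges_at EY v. f v (iY v e) = iZ (F v) (F ` e))) \<and>
     (\<forall>v1 v2. {v1, v2} \<in> EY \<and> v1 \<in> internal VY EY \<and> v2 \<in> internal VY EY \<longrightarrow>
        local_degree (SY v1) (SZ (F v1)) (f v1) (iY v1 {v1, v2}) =
        local_degree (SY v2) (SZ (F v2)) (f v2) (iY v2 {v1, v2}))"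

text \<open>Degree of a vertex of T^Y: deg f_v for internal v; for a leaf y with (unique) edge e
  to the vertex u, the local degree of f_u at i_u(e).\<close>

definition cover_vdeg ::
  "'v set \<Rightarrow> 'v set set \<Rightarrow> ('v \<Rightarrow> (real^3) set) \<Rightarrow> ('v \<Rightarrow> 'v set \<Rightarrow> real^3) \<Rightarrow>
   ('w \<Rightarrow> (real^3) set) \<Rightarrow> ('v \<Rightarrow> 'w) \<Rightarrow> ('v \<Rightarrow> real^3 \<Rightarrow> real^3) \<Rightarrow> 'v \<Rightarrow> nat" where
  "cover_vdeg VY EY SY iY SZ F f v =
     (if v \<in> internal VY EY then branched_degree (SY v) (SZ (F v)) (f v)
      else (let e = (THE e. e \<in> edges_at EY v); u = (THE u. u \<in> e \<and> u \<noteq> v)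
            in local_degree (SY u) (SZ (F u)) (f u) (iY u e)))"

end

theory Submission
  imports Defs
begin

(* At an internal vertex v the map f_v is a branched cover of 2-spheres which is an honest
   covering off the marked points.  Away from the fibre over one point q it is then a covering of
   the simply connected sphere punctured at q, hence injective there; so a branched cover with
   at most one critical point has degree 1.  Consequently a vertex of degree > 1 has a critical
   point, a critical point always has a partner, and all critical points are marked, i.e. sit on
   edges.  Calling an edge critical when its local degree is > 1, every critical vertex lies on a
   critical edge, both ends of a critical edge are critical, and at an internal vertex critical
   edges come at least in pairs.  In a tree, a longest path of critical edges through v therefore
   ends at leaves on both sides. *)

section \<open>Topological 2-spheres\<close>

lemma homeomorphism_imp_inj_on: "homeomorphism S T f g \<Longrightarrow> inj_on f S"
  by (metis homeomorphism_apply1 inj_on_inverseI)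

lemma homeomorphism_Diff:
  assumes "homeomorphism X Y h k" "B \<subseteq> X"
  shows "homeomorphism (X - B) (Y - h ` B) h k"
proof (rule homeomorphism_of_subsets[OF assms(1)])
  have "inj_on h X" "h ` X = Y"
    using assms(1) homeomorphism_imp_inj_on[OF assms(1)] by (auto simp: homeomorphism_def)
  then show "h ` (X - B) = Y - h ` B"
    using assms(2) by (simp add: inj_on_image_set_diff)
qed auto

lemma infinite_sphere:
  fixes a :: "'a::euclidean_space"
  assumes "2 \<le> DIM('a)" "0 < r"
  shows "infinite (sphere a r)"
proof
  assume "finite (sphere a r)"
  moreover have "connected (sphere a r)" "sphere a r \<noteq> {}"
    using connected_sphere[OF assms(1)] assms(2) by auto
  ultimately obtain b where b: "sphere a r = {b}"
    using connected_finite_iff_sing by blast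
  then have "b \<in> sphere a r"
    by simp
  then have "a + a - b \<in> sphere a r"
    by (simp add: dist_norm norm_minus_commute algebra_simps)
  then have "a + a = b + b"
    using b by (simp add: diff_eq_eq)
  then have "(2::real) *\<^sub>R a = 2 *\<^sub>R b"
    by (simp only: scaleR_2)
  then have "a = b"
    by simp
  then show False
    using \<open>b \<in> sphere a r\<close> assms(2) by simp
qed

lemma infinite_homeomorphic_sphere:
  fixes X :: "'a::t1_space set"
  assumes "X homeomorphic sphere (0::real^3) 1"
  shows "infinite X"
proof
  assume "finite X"
  then have "finite (sphere (0::real^3) 1)"
    using homeomorphic_finite[of X "sphere (0::real^3) 1"] assms homeomorphic_sym by blast
  moreover have "infinite (sphere (0::real^3) 1)"
    by (rule infinite_sphere) auto
  ultimately show False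
    by contradiction
qed

lemma punctured_homeomorphic_sphere_plane:
  assumes "X homeomorphic sphere (0::real^3) 1" "q \<in> X"
  shows "(X - {q}) homeomorphic {x::real^3. axis 1 1 \<bullet> x = 0}"
proof -
  obtain h k where hk: "homeomorphism X (sphere (0::real^3) 1) h k"
    using assms(1) homeomorphic_def by blast
  have "(X - {q}) homeomorphic (sphere 0 1 - {h q})"
    using homeomorphism_Diff[OF hk, of "{q}"] assms(2) homeomorphic_def by auto
  also have "\<dots> homeomorphic {x::real^3. axis 1 1 \<bullet> x = 0}"
    using hk assms(2) by (intro homeomorphic_punctured_sphere_hyperplane) (auto simp: homeomorphism_def)
  finally show ?thesis .
qed

lemma connected_homeomorphic_sphere_Diff_finite:
  assumes X: "X homeomorphic sphere (0::real^3) 1" and "finite A"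
  shows "connected (X - A)"
proof (cases "X \<inter> A = {}")
  case True
  then show ?thesis
    using homeomorphic_connectedness[OF X] connected_sphere[of "0::real^3" 1] by (simp add: Diff_triv)
next
  case False
  then obtain q where q: "q \<in> X" "q \<in> A" by blast
  define P where "P = {x::real^3. axis 1 1 \<bullet> x = 0}"
  obtain h k where hk: "homeomorphism (X - {q}) P h k"
    using punctured_homeomorphic_sphere_plane[OF X q(1)] homeomorphic_def P_def by blast
  have "X - A = (X - {q}) - (X - {q}) \<inter> A"
    using q by auto
  then have "(X - A) homeomorphic (P - h ` ((X - {q}) \<inter> A))"
    using homeomorphism_Diff[OF hk, of "(X - {q}) \<inter> A"] by (auto simp: homeomorphic_def)
  moreover have "path_connected (P - h ` ((X - {q}) \<inter> A))"
    using \<open>finite A\<close> unfolding P_def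
    by (intro path_connected_convex_diff_countable) (auto simp: convex_hyperplane collinear_aff_dim countable_finite)
  ultimately show ?thesis
    using homeomorphic_connectedness path_connected_imp_connected by blast
qed

lemma punctured_homeomorphic_sphere_simply_connected:
  fixes X :: "'a::real_normed_vector set"
  assumes "X homeomorphic sphere (0::real^3) 1" "q \<in> X"
  shows "simply_connected (X - {q})" "locally path_connected (X - {q})"
proof -
  have hom: "(X - {q}) homeomorphic {x::real^3. axis 1 1 \<bullet> x = 0}"
    by (rule punctured_homeomorphic_sphere_plane[OF assms])
  have cvx: "convex {x::real^3. axis 1 1 \<bullet> x = 0}"
    by (rule convex_hyperplane)
  show "simply_connected (X - {q})"
    using homeomorphic_simply_connected_eq[OF hom] convex_imp_simply_connected[OF cvx] by simp
  have "locally path_connected (X - {q}) \<longleftrightarrow> locally path_connected {x::real^3. axis 1 1 \<bullet> x = 0}"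
    by (rule homeomorphic_locally[OF hom]) (rule homeomorphic_path_connectedness)
  then show "locally path_connected (X - {q})"
    using convex_imp_locally_path_connected[OF cvx] by simp
qed

section \<open>Coverings\<close>

lemma covering_space_inj_on_simply_connected:
  fixes p :: "'a::real_normed_vector \<Rightarrow> 'b::real_normed_vector"
  assumes cov: "covering_space C p S" and "connected C"
    and "simply_connected S" "locally path_connected S"
  shows "inj_on p C"
proof (rule inj_onI)
  fix x1 x2 assume x: "x1 \<in> C" "x2 \<in> C" and eq: "p x1 = p x2"
  have pC: "p \<in> C \<rightarrow> S" and contp: "continuous_on C p"
    using covering_space_imp_surjective[OF cov] covering_space_imp_continuous[OF cov] by auto
  have "p x1 \<in> S"
    using x(1) pC by blast
  obtain g where contg: "continuous_on S g" and gS: "g \<in> S \<rightarrow> C"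
    and gx1: "g (p x1) = x1" and pg: "\<And>y. y \<in> S \<Longrightarrow> p (g y) = y"
    by (rule covering_space_lift_strong[OF cov x(1) \<open>p x1 \<in> S\<close> assms(3,4) continuous_on_id]) auto
  \<comment> \<open>g \<circ> p and the identity both lift p through the covering and agree at x1\<close>
  have gp_cont: "continuous_on C (g \<circ> p)"
    unfolding o_def by (rule continuous_on_compose2[OF contg contp]) (use pC in auto)
  have gp_C: "g \<circ> p \<in> C \<rightarrow> C"
    using pC gS by (simp add: Pi_iff)
  have gp_lift: "p x = p ((g \<circ> p) x)" if "x \<in> C" for x
    using that pC pg by (simp add: Pi_iff)
  have id_lift: "\<And>x. x \<in> C \<Longrightarrow> p x = p (id x)"
    by simp
  have "(g \<circ> p) x1 = id x1"
    using gx1 by simp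
  from covering_space_lift_unique[OF cov this contp pC gp_cont gp_C gp_lift continuous_on_id' _ id_lift
      \<open>connected C\<close> x]
  have "(g \<circ> p) x2 = id x2"
    by simp
  then show "x1 = x2"
    using gx1 eq by simp
qed

lemma covering_space_card_fibre_eq_card_sheets:
  assumes "\<Union>v = C \<inter> p -` T" "pairwise disjnt v" "\<And>u. u \<in> v \<Longrightarrow> \<exists>q. homeomorphism u T p q"
    and "y \<in> T"
  shows "card (C \<inter> p -` {y}) = card v"
proof -
  have "\<forall>u\<in>v. \<exists>q. homeomorphism u T p q"
    using assms(3) by blast
  from bchoice[OF this] obtain q where "\<forall>u\<in>v. homeomorphism u T p (q u)"
    by blast
  then have q: "homeomorphism u T p (q u)" if "u \<in> v" for u
    using that by blast
  have qy: "q u y \<in> u" "p (q u y) = y" if "u \<in> v" for u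
    using q[OF that] \<open>y \<in> T\<close> unfolding homeomorphism_def by blast+
  have "bij_betw (\<lambda>u. q u y) v (C \<inter> p -` {y})"
  proof (rule bij_betw_imageI)
    show "inj_on (\<lambda>u. q u y) v"
    proof (rule inj_onI)
      fix u1 u2 assume u: "u1 \<in> v" "u2 \<in> v" "q u1 y = q u2 y"
      then have "q u1 y \<in> u1" "q u1 y \<in> u2"
        using qy(1) by metis+
      then show "u1 = u2"
        using assms(2) u(1,2) by (meson disjnt_iff pairwiseD)
    qed
    show "(\<lambda>u. q u y) ` v = C \<inter> p -` {y}"
    proof
      show "(\<lambda>u. q u y) ` v \<subseteq> C \<inter> p -` {y}"
      proof (rule image_subsetI)
        fix u assume "u \<in> v"
        then have "q u y \<in> \<Union>v"
          using qy(1) by blast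
        then show "q u y \<in> C \<inter> p -` {y}"
          using assms(1) qy(2)[OF \<open>u \<in> v\<close>] by simp
      qed
      show "C \<inter> p -` {y} \<subseteq> (\<lambda>u. q u y) ` v"
      proof
        fix z assume z: "z \<in> C \<inter> p -` {y}"
        then have "z \<in> \<Union>v"
          using assms(1,4) by simp
        then obtain u where u: "u \<in> v" "z \<in> u"
          by blast
        then have "z = q u y"
          using homeomorphism_apply1[OF q[OF u(1)] u(2)] z by simp
        then show "z \<in> (\<lambda>u. q u y) ` v"
          using u(1) by blast
      qed
    qed
  qed
  then show ?thesis
    by (simp add: bij_betw_same_card)
qed

lemma covering_space_card_fibre_const:
  assumes cov: "covering_space C p S" and "connected S" "y \<in> S" "y' \<in> S"
  shows "card (C \<inter> p -` {y}) = card (C \<inter> p -` {y'})"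
proof -
  have "(\<lambda>y. card (C \<inter> p -` {y})) constant_on S"
  proof (rule locally_constant_imp_constant[OF \<open>connected S\<close>])
    fix a assume "a \<in> S"
    with cov obtain T where T: "a \<in> T" "openin (top_of_set S) T"
      and "\<exists>v. \<Union>v = C \<inter> p -` T \<and> (\<forall>u\<in>v. openin (top_of_set C) u) \<and>
             pairwise disjnt v \<and> (\<forall>u\<in>v. \<exists>q. homeomorphism u T p q)"
      unfolding covering_space_def by meson
    then obtain v where "\<Union>v = C \<inter> p -` T" "pairwise disjnt v" "\<forall>u\<in>v. \<exists>q. homeomorphism u T p q"
      by meson
    then have "card (C \<inter> p -` {x}) = card (C \<inter> p -` {a})" if "x \<in> T" for x
      using covering_space_card_fibre_eq_card_sheets[of v C p T] that T(1) by metis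
    with T show "\<exists>T. openin (top_of_set S) T \<and> a \<in> T \<and>
        (\<forall>x\<in>T. card (C \<inter> p -` {x}) = card (C \<inter> p -` {a}))"
      by blast
  qed
  then show ?thesis
    using assms(3,4) unfolding constant_on_def by metis
qed

lemma finite_fibre_isolated:
  fixes f :: "'a::t1_space \<Rightarrow> 'b::t1_space"
  assumes "compact S" "continuous_on S f"
    and iso: "\<And>x. x \<in> S \<Longrightarrow> f x = y \<Longrightarrow> \<exists>U. openin (top_of_set S) U \<and> x \<in> U \<and> U \<inter> f -` {y} \<subseteq> {x}"
  shows "finite (S \<inter> f -` {y})"
proof -
  have "closedin (top_of_set S) {x \<in> S. f x = y}"
    by (rule continuous_closedin_preimage_constant[OF assms(2)])
  then have "compact (S \<inter> f -` {y})"
    using closedin_compact[OF assms(1)] by (simp add: Int_def vimage_def)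
  moreover have "discrete (S \<inter> f -` {y})"
  proof (rule discreteI)
    fix x assume x: "x \<in> S \<inter> f -` {y}"
    then obtain U where "openin (top_of_set S) U" "x \<in> U" "U \<inter> f -` {y} \<subseteq> {x}"
      using iso by blast
    then obtain V where "open V" "U = S \<inter> V"
      by (meson openin_open)
    with \<open>x \<in> U\<close> \<open>U \<inter> f -` {y} \<subseteq> {x}\<close> x show "x isolated_in (S \<inter> f -` {y})"
      unfolding isolated_in_def by blast
  qed
  ultimately show ?thesis
    using discrete_compact_finite_iff by blast
qed

lemma finite_disjoint_balls:
  fixes F :: "'a::heine_borel set"
  assumes "finite F"
  obtains r where "r > 0" "\<And>a b. a \<in> F \<Longrightarrow> b \<in> F \<Longrightarrow> a \<noteq> b \<Longrightarrow> ball a r \<inter> ball b r = {}"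
proof -
  have "uniform_discrete F"
    using uniform_discrete_finite_iff[of F] assms by blast
  then obtain e where e: "e > 0" "\<And>x y. x \<in> F \<Longrightarrow> y \<in> F \<Longrightarrow> dist x y < e \<Longrightarrow> x = y"
    unfolding uniform_discrete_def by blast
  have disj: "ball a (e / 2) \<inter> ball b (e / 2) = {}" if "a \<in> F" "b \<in> F" "a \<noteq> b" for a b
  proof (rule ccontr)
    assume "ball a (e / 2) \<inter> ball b (e / 2) \<noteq> {}"
    then obtain z where "dist a z < e / 2" "dist b z < e / 2"
      by auto
    then have "dist a b < e"
      by (rule dist_triangle_half_l)
    then show False
      using e(2) that by blast
  qed
  show ?thesis
    by (rule that[of "e / 2"]) (use e(1) disj in auto)
qed

lemma compact_local_homeomorphism_fibre_nbhds:
  fixes f :: "'a::heine_borel \<Rightarrow> 'b::metric_space"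
  assumes cS: "compact S" and cf: "continuous_on S f"
    and loc: "\<And>x. x \<in> S \<Longrightarrow> f x = y \<Longrightarrow> \<exists>U W g. openin (top_of_set S) U \<and> x \<in> U \<and>
                openin (top_of_set T) W \<and> homeomorphism U W f g"
  obtains U g where "finite (S \<inter> f -` {y})"
    "\<And>x. x \<in> S \<inter> f -` {y} \<Longrightarrow> openin (top_of_set S) (U x) \<and> x \<in> U x \<and>
       openin (top_of_set T) (f ` U x) \<and> homeomorphism (U x) (f ` U x) f (g x)"
    "\<And>x x'. x \<in> S \<inter> f -` {y} \<Longrightarrow> x' \<in> S \<inter> f -` {y} \<Longrightarrow> x \<noteq> x' \<Longrightarrow> U x \<inter> U x' = {}"
proof -
  define Fy where "Fy = S \<inter> f -` {y}"
  obtain U W g where UWg: "\<And>x. x \<in> Fy \<Longrightarrow> openin (top_of_set S) (U x) \<and> x \<in> U x \<and>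
      openin (top_of_set T) (W x) \<and> homeomorphism (U x) (W x) f (g x)"
    using loc unfolding Fy_def by simp metis
  have hom: "homeomorphism (U x) (W x) f (g x)" and US: "U x \<subseteq> S" and xU: "x \<in> U x"
    and oU: "openin (top_of_set S) (U x)" and oW: "openin (top_of_set T) (W x)"
    if "x \<in> Fy" for x
    using UWg[OF that] openin_imp_subset by blast+
  have fin: "finite Fy"
    unfolding Fy_def
  proof (rule finite_fibre_isolated[OF cS cf])
    fix x assume "x \<in> S" "f x = y"
    then have x: "x \<in> Fy"
      by (simp add: Fy_def)
    have "U x \<inter> f -` {y} \<subseteq> {x}"
      using homeomorphism_imp_inj_on[OF hom[OF x]] xU[OF x] \<open>f x = y\<close> by (auto dest: inj_onD)
    then show "\<exists>U. openin (top_of_set S) U \<and> x \<in> U \<and> U \<inter> f -` {y} \<subseteq> {x}"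
      using oU[OF x] xU[OF x] by blast
  qed
  obtain r where r: "r > 0" "\<And>a b. a \<in> Fy \<Longrightarrow> b \<in> Fy \<Longrightarrow> a \<noteq> b \<Longrightarrow> ball a r \<inter> ball b r = {}"
    using finite_disjoint_balls[OF fin] by blast
  define U' where "U' x = U x \<inter> ball x r" for x
  have U'_props: "openin (top_of_set S) (U' x) \<and> x \<in> U' x \<and>
      openin (top_of_set T) (f ` U' x) \<and> homeomorphism (U' x) (f ` U' x) f (g x)"
    if x: "x \<in> Fy" for x
  proof (intro conjI)
    show oU': "openin (top_of_set S) (U' x)"
      unfolding U'_def using oU[OF x] by (simp add: openin_Int_open)
    show "x \<in> U' x"
      using xU[OF x] r(1) by (simp add: U'_def)
    have "openin (top_of_set (U x)) (U' x)"
      using oU' US[OF x] by (auto simp: U'_def intro: openin_subset_trans)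
    then have "openin (top_of_set (W x)) (f ` U' x)"
      using homeomorphism_imp_open_map[OF hom[OF x]] by blast
    then show "openin (top_of_set T) (f ` U' x)"
      using oW[OF x] openin_trans by blast
    show "homeomorphism (U' x) (f ` U' x) f (g x)"
      using hom[OF x] by (rule homeomorphism_of_subsets) (auto simp: U'_def homeomorphism_def)
  qed
  show ?thesis
    by (rule that[of U' g]) (use fin U'_props r(2) in \<open>auto simp: Fy_def U'_def\<close>)
qed

lemma evenly_covered_by_sheets:
  assumes cf: "continuous_on S f" and fS: "f ` S \<subseteq> T" and oW: "openin (top_of_set T) W"
    and U: "\<And>x. x \<in> I \<Longrightarrow> openin (top_of_set S) (U x) \<and> homeomorphism (U x) (f ` U x) f (g x)"
    and disj: "\<And>x x'. x \<in> I \<Longrightarrow> x' \<in> I \<Longrightarrow> x \<noteq> x' \<Longrightarrow> U x \<inter> U x' = {}"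
    and W_sub: "\<And>x. x \<in> I \<Longrightarrow> W \<subseteq> f ` U x" and preimage_sub: "S \<inter> f -` W \<subseteq> (\<Union>x\<in>I. U x)"
  shows "\<Union>((\<lambda>x. U x \<inter> f -` W) ` I) = S \<inter> f -` W"
    and "\<And>u. u \<in> (\<lambda>x. U x \<inter> f -` W) ` I \<Longrightarrow> openin (top_of_set S) u"
    and "pairwise disjnt ((\<lambda>x. U x \<inter> f -` W) ` I)"
    and "\<And>u. u \<in> (\<lambda>x. U x \<inter> f -` W) ` I \<Longrightarrow> \<exists>q. homeomorphism u W f q"
proof -
  have US: "U x \<subseteq> S" if "x \<in> I" for x
    using U[OF that] openin_imp_subset by blast
  show "\<Union>((\<lambda>x. U x \<inter> f -` W) ` I) = S \<inter> f -` W"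
  proof
    show "\<Union>((\<lambda>x. U x \<inter> f -` W) ` I) \<subseteq> S \<inter> f -` W"
      using US by blast
    show "S \<inter> f -` W \<subseteq> \<Union>((\<lambda>x. U x \<inter> f -` W) ` I)"
      using preimage_sub by blast
  qed
  have oSW: "openin (top_of_set S) (S \<inter> f -` W)"
    using continuous_openin_preimage[OF cf _ oW] fS by blast
  show "openin (top_of_set S) u" if u: "u \<in> (\<lambda>x. U x \<inter> f -` W) ` I" for u
  proof -
    obtain x where x: "x \<in> I" "u = U x \<inter> f -` W"
      using u by blast
    then have "u = U x \<inter> (S \<inter> f -` W)"
      using US by blast
    then show ?thesis
      using U[OF x(1)] oSW by (simp add: openin_Int)
  qed
  show "pairwise disjnt ((\<lambda>x. U x \<inter> f -` W) ` I)"
    using disj by (auto simp: pairwise_def disjnt_def)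
  show "\<exists>q. homeomorphism u W f q" if u: "u \<in> (\<lambda>x. U x \<inter> f -` W) ` I" for u
  proof -
    obtain x where x: "x \<in> I" "u = U x \<inter> f -` W"
      using u by blast
    then have "f ` u = W"
      using W_sub by blast
    then have "homeomorphism u W f (g x)"
      using U[OF x(1)] x(2) by (metis homeomorphism_of_subsets inf_le1 order_refl)
    then show ?thesis
      by blast
  qed
qed

lemma compact_local_homeomorphism_evenly_covered:
  fixes f :: "'a::heine_borel \<Rightarrow> 'b::metric_space"
  assumes cS: "compact S" and cf: "continuous_on S f" and fS: "f ` S = T"
    and oT0: "openin (top_of_set T) T0" and yT0: "y \<in> T0"
    and loc: "\<And>x. x \<in> S \<Longrightarrow> f x = y \<Longrightarrow> \<exists>U W g. openin (top_of_set S) U \<and> x \<in> U \<and>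
                openin (top_of_set T) W \<and> homeomorphism U W f g"
  obtains W v where "y \<in> W" "openin (top_of_set T) W" "W \<subseteq> T0" "\<Union>v = S \<inter> f -` W"
    "\<And>u. u \<in> v \<Longrightarrow> openin (top_of_set S) u" "pairwise disjnt v"
    "\<And>u. u \<in> v \<Longrightarrow> \<exists>q. homeomorphism u W f q"
proof -
  define Fy where "Fy = S \<inter> f -` {y}"
  obtain U g where fin: "finite Fy"
    and U: "\<And>x. x \<in> Fy \<Longrightarrow> openin (top_of_set S) (U x) \<and> x \<in> U x \<and>
       openin (top_of_set T) (f ` U x) \<and> homeomorphism (U x) (f ` U x) f (g x)"
    and disj: "\<And>x x'. x \<in> Fy \<Longrightarrow> x' \<in> Fy \<Longrightarrow> x \<noteq> x' \<Longrightarrow> U x \<inter> U x' = {}"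
    using compact_local_homeomorphism_fibre_nbhds[OF cS cf loc] unfolding Fy_def by blast
  \<comment> \<open>the points outside the sheets form a compact set whose image misses y\<close>
  define K where "K = S - (\<Union>x\<in>Fy. U x)"
  have "closedin (top_of_set S) K"
    unfolding K_def using U by (intro closedin_diff) auto
  then have "compact K"
    using closedin_compact[OF cS] by blast
  then have clK: "closed (f ` K)"
    using cf by (intro compact_imp_closed compact_continuous_image)
      (auto simp: K_def intro: continuous_on_subset)
  have yK: "y \<notin> f ` K"
    using U by (force simp: K_def Fy_def)
  define W where "W = (T0 \<inter> (\<Inter>x\<in>Fy. f ` U x)) - f ` K"
  have "Fy \<noteq> {}"
    using yT0 fS openin_imp_subset[OF oT0] by (force simp: Fy_def)
  then have "openin (top_of_set T) (\<Inter>x\<in>Fy. f ` U x)"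
    using U fin by (intro openin_INT2) auto
  moreover have "closedin (top_of_set T) (T \<inter> f ` K)"
    using clK by (rule closedin_closed_Int)
  ultimately have "openin (top_of_set T) ((T0 \<inter> (\<Inter>x\<in>Fy. f ` U x)) - (T \<inter> f ` K))"
    using oT0 by (intro openin_diff openin_Int)
  moreover have "(T0 \<inter> (\<Inter>x\<in>Fy. f ` U x)) - (T \<inter> f ` K) = W"
    using openin_imp_subset[OF oT0] by (auto simp: W_def)
  ultimately have oW: "openin (top_of_set T) W"
    by simp
  have sheets: "openin (top_of_set S) (U x) \<and> homeomorphism (U x) (f ` U x) f (g x)"
    if "x \<in> Fy" for x
    using U[OF that] by blast
  have W_sub: "W \<subseteq> f ` U x" if "x \<in> Fy" for x
    using that unfolding W_def by blast
  have preimage_sub: "S \<inter> f -` W \<subseteq> (\<Union>x\<in>Fy. U x)"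
    unfolding W_def K_def by blast
  have "f ` S \<subseteq> T"
    using fS by simp
  note evenly = evenly_covered_by_sheets[OF cf this oW sheets disj W_sub preimage_sub]
  have "y \<in> W"
    using yT0 yK U unfolding W_def Fy_def by blast
  moreover have "W \<subseteq> T0"
    unfolding W_def by blast
  ultimately show ?thesis
    by (rule that[OF _ oW _ evenly])
qed

lemma covering_space_compact_local_homeomorphism:
  fixes f :: "'a::heine_borel \<Rightarrow> 'b::metric_space"
  assumes "compact S" "continuous_on S f" "f ` S = T" and oT0: "openin (top_of_set T) T0"
    and loc: "\<And>x. x \<in> S \<Longrightarrow> f x \<in> T0 \<Longrightarrow> \<exists>U W g. openin (top_of_set S) U \<and> x \<in> U \<and>
                openin (top_of_set T) W \<and> homeomorphism U W f g"
  shows "covering_space (S \<inter> f -` T0) f T0"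
proof (rule covering_spaceI)
  have T0T: "T0 \<subseteq> T"
    using oT0 by (rule openin_imp_subset)
  show "continuous_on (S \<inter> f -` T0) f"
    using assms(2) by (rule continuous_on_subset) auto
  show "f ` (S \<inter> f -` T0) = T0"
    using assms(3) T0T by auto
  fix y assume y: "y \<in> T0"
  have locy: "\<And>x. x \<in> S \<Longrightarrow> f x = y \<Longrightarrow> \<exists>U W g. openin (top_of_set S) U \<and> x \<in> U \<and>
                openin (top_of_set T) W \<and> homeomorphism U W f g"
    using loc y by blast
  obtain W v where W: "y \<in> W" "openin (top_of_set T) W" "W \<subseteq> T0" and v: "\<Union>v = S \<inter> f -` W"
    "\<And>u. u \<in> v \<Longrightarrow> openin (top_of_set S) u" "pairwise disjnt v"
    "\<And>u. u \<in> v \<Longrightarrow> \<exists>q. homeomorphism u W f q"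
    using compact_local_homeomorphism_evenly_covered[OF assms(1-3) oT0 y locy] by blast
  have UN_v: "\<Union>v = (S \<inter> f -` T0) \<inter> f -` W"
    using v(1) W(3) by blast
  show "\<exists>W. y \<in> W \<and> openin (top_of_set T0) W \<and>
      (\<exists>v. \<Union>v = (S \<inter> f -` T0) \<inter> f -` W \<and> (\<forall>u\<in>v. openin (top_of_set (S \<inter> f -` T0)) u) \<and>
           pairwise disjnt v \<and> (\<forall>u\<in>v. \<exists>q. homeomorphism u W f q))"
  proof (intro exI[of _ W] exI[of _ v] conjI ballI)
    show "y \<in> W"
      by (rule W(1))
    show "openin (top_of_set T0) W"
      using W(2,3) T0T by (rule openin_subset_trans)
    show "\<Union>v = (S \<inter> f -` T0) \<inter> f -` W"
      by (rule UN_v)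
    show "pairwise disjnt v"
      by (rule v(3))
    show "openin (top_of_set (S \<inter> f -` T0)) u" if "u \<in> v" for u
    proof (rule openin_subset_trans[OF v(2)[OF that]])
      show "u \<subseteq> S \<inter> f -` T0" "S \<inter> f -` T0 \<subseteq> S"
        using that UN_v by blast+
    qed
    show "\<exists>q. homeomorphism u W f q" if "u \<in> v" for u
      using v(4)[OF that] .
  qed
qed

lemma inj_on_local_homeomorphism_off_fibre:
  fixes f :: "'a::euclidean_space \<Rightarrow> 'b::euclidean_space"
  assumes S: "S homeomorphic sphere (0::real^3) 1" and T: "T homeomorphic sphere (0::real^3) 1"
    and cf: "continuous_on S f" and fS: "f ` S = T" and q: "q \<in> T"
    and fin: "finite (S \<inter> f -` {q})"
    and loc: "\<And>x. x \<in> S \<Longrightarrow> f x \<noteq> q \<Longrightarrow> \<exists>U W g. openin (top_of_set S) U \<and> x \<in> U \<and>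
                openin (top_of_set T) W \<and> homeomorphism U W f g"
  shows "inj_on f (S - f -` {q})"
proof (rule covering_space_inj_on_simply_connected)
  have "compact S"
    using S homeomorphic_compactness compact_sphere by blast
  moreover have "openin (top_of_set T) (T - {q})"
    by (simp add: openin_delete)
  ultimately have "covering_space (S \<inter> f -` (T - {q})) f (T - {q})"
    using loc by (intro covering_space_compact_local_homeomorphism[OF _ cf fS]) auto
  moreover have "S \<inter> f -` (T - {q}) = S - f -` {q}"
    using fS by auto
  ultimately show "covering_space (S - f -` {q}) f (T - {q})"
    by simp
  have "S - f -` {q} = S - (S \<inter> f -` {q})"
    by blast
  then show "connected (S - f -` {q})"
    using connected_homeomorphic_sphere_Diff_finite[OF S fin] by simp
  show "simply_connected (T - {q})" "locally path_connected (T - {q})"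
    using punctured_homeomorphic_sphere_simply_connected[OF T q] by auto
qed

section \<open>The local model z \<mapsto> z ^ d\<close>

lemma branched_atE:
  assumes "branched_at S T f p d"
  obtains U W \<phi> \<phi>' \<psi> \<psi>' where "openin (top_of_set S) U" "p \<in> U" "openin (top_of_set T) W"
    "f ` U = W" "homeomorphism U (ball (0::complex) 1) \<phi> \<phi>'" "homeomorphism W (ball (0::complex) 1) \<psi> \<psi>'"
    "\<phi> p = 0" "\<psi> (f p) = 0" "\<forall>x\<in>U. \<psi> (f x) = (\<phi> x) ^ d"
  using assms unfolding branched_at_def by (elim exE conjE) (rule that)

lemma nth_roots_subset_ball:
  fixes c :: complex
  assumes "0 < r" "norm c < r ^ d"
  shows "{z. z ^ d = c} \<subseteq> ball 0 r"
proof
  fix z assume "z \<in> {z. z ^ d = c}"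
  then have "norm z ^ d = norm c"
    by (simp add: norm_power[symmetric])
  then have "norm z ^ d < r ^ d"
    using assms(2) by simp
  then show "z \<in> ball 0 r"
    using power_less_imp_less_base[of "norm z" d r] assms(1) by simp
qed

lemma branched_at_fibre_card_le:
  assumes "branched_at S T f p d" "0 < d"
  obtains U where "openin (top_of_set S) U" "p \<in> U"
    "\<And>y. finite (U \<inter> f -` {y}) \<and> card (U \<inter> f -` {y}) \<le> d"
proof -
  obtain U W \<phi> \<phi>' \<psi> \<psi>' where oU: "openin (top_of_set S) U" and pU: "p \<in> U"
    and "openin (top_of_set T) W" "f ` U = W"
    and h1: "homeomorphism U (ball (0::complex) 1) \<phi> \<phi>'"
    and "homeomorphism W (ball (0::complex) 1) \<psi> \<psi>'" "\<phi> p = 0" "\<psi> (f p) = 0"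
    and eq: "\<forall>x\<in>U. \<psi> (f x) = (\<phi> x) ^ d"
    by (rule branched_atE[OF assms(1)])
  have "finite (U \<inter> f -` {y}) \<and> card (U \<inter> f -` {y}) \<le> d" for y
  proof -
    let ?R = "{z::complex. z ^ d = \<psi> y}"
    have sub: "\<phi> ` (U \<inter> f -` {y}) \<subseteq> ?R"
      using eq by auto
    have finR: "finite ?R"
      using assms(2) by (rule finite_nth_roots)
    have cardR: "card ?R \<le> d"
    proof (cases "\<psi> y = 0")
      case True
      then have "?R = {0}"
        using assms(2) by auto
      then show ?thesis
        using assms(2) by simp
    qed (use card_nth_roots assms(2) in simp)
    have inj: "inj_on \<phi> (U \<inter> f -` {y})"
      using homeomorphism_imp_inj_on[OF h1] by (rule inj_on_subset) auto
    then have fin: "finite (U \<inter> f -` {y})"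
      using finite_imageD[OF finite_subset[OF sub finR]] by blast
    have "card (U \<inter> f -` {y}) = card (\<phi> ` (U \<inter> f -` {y}))"
      using card_image[OF inj] by simp
    also have "\<dots> \<le> d"
      using card_mono[OF finR sub] cardR by linarith
    finally show ?thesis
      using fin by simp
  qed
  then show ?thesis
    using that oU pU by blast
qed

lemma chart_small_ball:
  fixes \<phi> :: "'a::topological_space \<Rightarrow> complex"
  assumes h: "homeomorphism U (ball 0 1) \<phi> \<phi>'" and "U \<subseteq> S" and oV: "openin (top_of_set S) V"
    and "p \<in> U" "p \<in> V" "\<phi> p = 0"
  obtains r where "0 < r" "r \<le> 1" "ball 0 r \<subseteq> \<phi> ` (U \<inter> V)"
proof -
  obtain Ov where Ov: "open Ov" "V = S \<inter> Ov"
    using oV openin_open by metis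
  have "U \<inter> V = U \<inter> Ov"
    using assms(2) Ov(2) by blast
  then have "openin (top_of_set U) (U \<inter> V)"
    using Ov(1) by (simp add: openin_open_Int)
  then have "openin (top_of_set (ball 0 1)) (\<phi> ` (U \<inter> V))"
    using homeomorphism_imp_open_map[OF h] by blast
  then have "open (\<phi> ` (U \<inter> V))"
    using openin_open_trans open_ball by blast
  moreover have "0 \<in> \<phi> ` (U \<inter> V)"
    using assms(4-6) by force
  ultimately obtain r0 where r0: "r0 > 0" "ball 0 r0 \<subseteq> \<phi> ` (U \<inter> V)"
    using open_contains_ball by blast
  show ?thesis
    by (rule that[of "min r0 1"]) (use r0 in auto)
qed

lemma branched_at_many_preimages:
  assumes "branched_at S T f p d" "0 < d" "openin (top_of_set S) V" "p \<in> V" "finite B"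
  obtains y A where "y \<in> T" "y \<notin> B" "y \<noteq> f p" "A \<subseteq> V \<inter> f -` {y}" "finite A" "card A = d"
proof -
  obtain U W \<phi> \<phi>' \<psi> \<psi>' where oU: "openin (top_of_set S) U" and pU: "p \<in> U"
    and oW: "openin (top_of_set T) W" and fU: "f ` U = W"
    and h1: "homeomorphism U (ball (0::complex) 1) \<phi> \<phi>'"
    and h2: "homeomorphism W (ball (0::complex) 1) \<psi> \<psi>'"
    and p0: "\<phi> p = 0" and "\<psi> (f p) = 0" and eq: "\<forall>x\<in>U. \<psi> (f x) = (\<phi> x) ^ d"
    by (rule branched_atE[OF assms(1)])
  obtain r where r: "0 < r" "r \<le> 1" "ball 0 r \<subseteq> \<phi> ` (U \<inter> V)"
    using chart_small_ball[OF h1 openin_imp_subset[OF oU] assms(3) pU assms(4) p0] by blast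
  have rd: "0 < r ^ d" "r ^ d \<le> 1"
    using r by (auto simp: power_le_one)
  \<comment> \<open>in the chart of f p, pick a nonzero value c of the model map z ^ d, close enough to 0
      for its d roots to lie in the chart of V, and whose point in T avoids f p and B\<close>
  let ?C = "ball (0::complex) (r ^ d) - {0}"
  have "infinite (ball (0::complex) (r ^ d))"
    using uncountable_ball[OF rd(1), of "0::complex"] countable_finite by blast
  then have "infinite ?C"
    by simp
  moreover have "inj_on \<psi>' ?C"
    using homeomorphism_imp_inj_on[OF homeomorphism_symD[OF h2]]
    by (rule inj_on_subset) (use subset_ball[OF rd(2)] in blast)
  ultimately have "infinite (\<psi>' ` ?C)"
    using finite_imageD by blast
  then have "infinite (\<psi>' ` ?C - insert (f p) B)"
    using assms(5) Diff_infinite_finite by blast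
  then obtain c where c: "c \<in> ?C" "\<psi>' c \<notin> insert (f p) B"
    using infinite_imp_nonempty by blast
  then have c1: "c \<in> ball 0 1"
    using subset_ball[OF rd(2)] by blast
  define y where "y = \<psi>' c"
  have yW: "y \<in> W"
    using homeomorphism_image2[OF h2] c1 unfolding y_def by blast
  let ?R = "{z::complex. z ^ d = c}"
  have Rr: "?R \<subseteq> ball 0 r"
    using c(1) by (intro nth_roots_subset_ball[OF r(1)]) auto
  define A where "A = \<phi>' ` ?R"
  have "?R \<subseteq> ball 0 1"
    using Rr subset_ball[OF r(2)] by blast
  then have "inj_on \<phi>' ?R"
    using homeomorphism_imp_inj_on[OF homeomorphism_symD[OF h1]] by (rule inj_on_subset[rotated])
  then have "card A = d"
    unfolding A_def using card_nth_roots[of c d] c(1) assms(2) by (simp add: card_image)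
  moreover have "finite A"
    unfolding A_def using finite_nth_roots[OF assms(2)] by blast
  moreover have "A \<subseteq> V \<inter> f -` {y}"
  proof
    fix a assume "a \<in> A"
    then obtain z where z: "z \<in> ?R" "a = \<phi>' z"
      unfolding A_def by blast
    then obtain u where u: "u \<in> U \<inter> V" "z = \<phi> u"
      using Rr r(3) by blast
    have "a = u"
      using z u homeomorphism_apply1[OF h1, of u] by simp
    moreover have "\<psi> (f u) = c" "f u \<in> W"
      using eq u z fU by auto
    then have "f u = y"
      unfolding y_def using homeomorphism_apply1[OF h2, of "f u"] by simp
    ultimately show "a \<in> V \<inter> f -` {y}"
      using u by auto
  qed
  ultimately show ?thesis
    using that[of y A] yW openin_imp_subset[OF oW] c(2) unfolding y_def by blast
qed

lemma branched_at_isolated: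
  assumes "branched_at S T f p d"
  obtains U where "openin (top_of_set S) U" "p \<in> U" "U \<inter> f -` {f p} \<subseteq> {p}"
proof -
  obtain U W \<phi> \<phi>' \<psi> \<psi>' where oU: "openin (top_of_set S) U" and pU: "p \<in> U"
    and "openin (top_of_set T) W" "f ` U = W"
    and h1: "homeomorphism U (ball (0::complex) 1) \<phi> \<phi>'"
    and "homeomorphism W (ball (0::complex) 1) \<psi> \<psi>'" and p0: "\<phi> p = 0" and fp0: "\<psi> (f p) = 0"
    and eq: "\<forall>x\<in>U. \<psi> (f x) = (\<phi> x) ^ d"
    by (rule branched_atE[OF assms])
  have "x = p" if "x \<in> U" "f x = f p" for x
  proof -
    have "\<phi> x ^ d = 0"
      using eq[rule_format, OF that(1)] that(2) fp0 by simp
    then have "\<phi> x = \<phi> p"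
      using p0 by simp
    then show ?thesis
      using homeomorphism_imp_inj_on[OF h1] that(1) pU by (auto dest: inj_onD)
  qed
  then show ?thesis
    using that oU pU by blast
qed

lemma branched_at_unique:
  assumes "branched_at S T f p d" "0 < d" "branched_at S T f p e" "0 < e"
  shows "d = e"
proof -
  have le: "d \<le> e" if H: "branched_at S T f p d" "0 < d" "branched_at S T f p e" "0 < e" for d e
  proof -
    obtain U where U: "openin (top_of_set S) U" "p \<in> U"
      "\<And>y. finite (U \<inter> f -` {y}) \<and> card (U \<inter> f -` {y}) \<le> e"
      using branched_at_fibre_card_le[OF H(3,4)] by blast
    obtain y A where A: "A \<subseteq> U \<inter> f -` {y}" "card A = d"
      using branched_at_many_preimages[OF H(1,2) U(1,2), of "{}"] by blast
    have "card A \<le> card (U \<inter> f -` {y})"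
      using card_mono[OF conjunct1[OF U(3)[of y]] A(1)] .
    then show "d \<le> e"
      using U(3)[of y] A(2) by linarith
  qed
  show ?thesis
    using le[OF assms] le[OF assms(3,4,1,2)] by simp
qed

lemma local_degree_branched_at:
  assumes "branched_covering S T f" "p \<in> S"
  shows "branched_at S T f p (local_degree S T f p)" "0 < local_degree S T f p"
proof -
  obtain d where "0 < d" "branched_at S T f p d"
    using assms unfolding branched_covering_def by blast
  then have "\<exists>!d. 0 < d \<and> branched_at S T f p d"
    using branched_at_unique by blast
  then have "0 < local_degree S T f p \<and> branched_at S T f p (local_degree S T f p)"
    unfolding local_degree_def by (rule theI')
  then show "branched_at S T f p (local_degree S T f p)" "0 < local_degree S T f p"
    by simp_all
qed

lemma branched_at_1_local_homeomorphism:
  assumes "branched_at S T f x 1"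
  obtains U W g where "openin (top_of_set S) U" "x \<in> U" "openin (top_of_set T) W"
    "homeomorphism U W f g"
proof -
  obtain U W \<phi> \<phi>' \<psi> \<psi>' where oU: "openin (top_of_set S) U" and xU: "x \<in> U"
    and oW: "openin (top_of_set T) W" and fU: "f ` U = W"
    and h1: "homeomorphism U (ball (0::complex) 1) \<phi> \<phi>'"
    and h2: "homeomorphism W (ball (0::complex) 1) \<psi> \<psi>'" and "\<phi> x = 0" "\<psi> (f x) = 0"
    and eq: "\<forall>x\<in>U. \<psi> (f x) = (\<phi> x) ^ 1"
    by (rule branched_atE[OF assms])
  \<comment> \<open>in charts f is the identity, so f agrees with the homeomorphism \<psi>' \<circ> \<phi>\<close>
  have "homeomorphism U W f (\<phi>' \<circ> \<psi>)"
  proof (rule homeomorphism_cong[OF homeomorphism_compose[OF h1 homeomorphism_symD[OF h2]]])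
    fix z assume z: "z \<in> U"
    then have "f z \<in> W"
      using fU by blast
    then have "f z = \<psi>' (\<psi> (f z))"
      by (rule homeomorphism_apply1[OF h2, symmetric])
    then show "f z = (\<psi>' \<circ> \<phi>) z"
      using eq z by simp
  qed auto
  then show ?thesis
    using that oU xU oW by blast
qed

section \<open>Branched covers of spheres with marked points\<close>

lemma inj_on_vimage_singleton_card_le_1:
  assumes "inj_on f A" "A \<subseteq> f -` {y}"
  shows "card A \<le> 1"
proof -
  have "card A = card (f ` A)"
    using card_image[OF assms(1)] by simp
  also have "\<dots> \<le> card {y}"
    using assms(2) by (intro card_mono) auto
  finally show ?thesis
    by simp
qed

locale marked_branched_cover =
  fixes S T :: "(real^3) set" and f :: "real^3 \<Rightarrow> real^3" and M N :: "(real^3) set"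
  assumes sphere_S: "S homeomorphic sphere (0::real^3) 1"
    and sphere_T: "T homeomorphic sphere (0::real^3) 1"
    and branched: "branched_covering S T f"
    and covering: "covering_space (S - M) f (T - N)"
    and finite_M: "finite M" and finite_N: "finite N"
    and marked_subset: "M \<subseteq> S" and marked_image: "f ` M \<subseteq> N"
begin

lemma continuous_on_f: "continuous_on S f" and image_f: "f ` S = T"
  using branched unfolding branched_covering_def by blast+

lemma branched_at_local_degree: "x \<in> S \<Longrightarrow> branched_at S T f x (local_degree S T f x)"
  and local_degree_pos: "x \<in> S \<Longrightarrow> 0 < local_degree S T f x"
  using local_degree_branched_at[OF branched] by blast+

lemma finite_fibre: "finite (S \<inter> f -` {y})"
proof (rule finite_fibre_isolated[OF _ continuous_on_f])
  show "compact S"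
    using sphere_S homeomorphic_compactness compact_sphere by blast
  fix x assume "x \<in> S" "f x = y"
  then show "\<exists>U. openin (top_of_set S) U \<and> x \<in> U \<and> U \<inter> f -` {y} \<subseteq> {x}"
    using branched_at_isolated[OF branched_at_local_degree] by metis
qed

lemma exists_regular_value:
  assumes "finite F"
  obtains y where "y \<in> T - N" "y \<notin> F"
proof -
  have "infinite (T - (F \<union> N))"
    using infinite_homeomorphic_sphere[OF sphere_T] assms finite_N by (simp add: Diff_infinite_finite)
  then show ?thesis
    using that infinite_imp_nonempty by blast
qed

lemma local_degree_unmarked:
  assumes "x \<in> S" "x \<notin> M"
  shows "local_degree S T f x = 1"
proof -
  have "x \<in> S - M"
    using assms by blast
  obtain V W q where xV: "x \<in> V" and oV: "openin (top_of_set (S - M)) V" and "f x \<in> W"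
    and "openin (top_of_set (T - N)) W" and hom: "homeomorphism V W f q"
    by (rule covering_space_local_homeomorphism[OF covering \<open>x \<in> S - M\<close>])
  have "openin (top_of_set S) (S - M)"
    by (intro openin_diff openin_subtopology_self finite_imp_closedin finite_M marked_subset)
  then have oV': "openin (top_of_set S) V"
    by (rule openin_trans[OF oV])
  obtain y A where "y \<in> T" "y \<notin> {}" "y \<noteq> f x"
    and A: "A \<subseteq> V \<inter> f -` {y}" "finite A" "card A = local_degree S T f x"
    by (rule branched_at_many_preimages[OF branched_at_local_degree[OF assms(1)] local_degree_pos[OF assms(1)]
          oV' xV finite.emptyI])
  have "inj_on f A"
    by (rule inj_on_subset[OF homeomorphism_imp_inj_on[OF hom]]) (use A(1) in blast)
  then have "card A \<le> 1"
    by (rule inj_on_vimage_singleton_card_le_1[of f A y]) (use A(1) in blast)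
  then show ?thesis
    using local_degree_pos[OF assms(1)] A(3) by linarith
qed

lemma critical_imp_marked: "x \<in> S \<Longrightarrow> 1 < local_degree S T f x \<Longrightarrow> x \<in> M"
  using local_degree_unmarked by fastforce

lemma card_fibre_const:
  assumes "y \<in> T - N" "y' \<in> T - N"
  shows "card (S \<inter> f -` {y}) = card (S \<inter> f -` {y'})"
proof -
  have fibre: "S \<inter> f -` {z} = (S - M) \<inter> f -` {z}" if "z \<in> T - N" for z
    using marked_image that by auto
  have "connected (T - N)"
    by (rule connected_homeomorphic_sphere_Diff_finite[OF sphere_T finite_N])
  then show ?thesis
    using covering_space_card_fibre_const[OF covering _ assms] fibre assms by simp
qed

lemma branched_degree_eq:
  assumes "y \<in> T - N"
  shows "branched_degree S T f = card (S \<inter> f -` {y})"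
  unfolding branched_degree_def
proof (rule the_equality)
  show "\<exists>B. finite B \<and> (\<forall>q\<in>T - B. card (S \<inter> f -` {q}) = card (S \<inter> f -` {y}))"
    using card_fibre_const assms finite_N by blast
  fix n assume "\<exists>B. finite B \<and> (\<forall>q\<in>T - B. card (S \<inter> f -` {q}) = n)"
  then obtain B where B: "finite B" "\<forall>q\<in>T - B. card (S \<inter> f -` {q}) = n"
    by blast
  obtain q where q: "q \<in> T - N" "q \<notin> B"
    using exists_regular_value[OF B(1)] by blast
  then have "n = card (S \<inter> f -` {q})"
    using B(2) by simp
  also have "\<dots> = card (S \<inter> f -` {y})"
    using card_fibre_const[OF q(1) assms] .
  finally show "n = card (S \<inter> f -` {y})" .
qed

lemma inj_on_off_fibre:
  assumes "q \<in> T" and unbranched: "\<And>x. x \<in> S \<Longrightarrow> f x \<noteq> q \<Longrightarrow> local_degree S T f x = 1"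
  shows "inj_on f (S - f -` {q})"
proof (rule inj_on_local_homeomorphism_off_fibre[OF sphere_S sphere_T continuous_on_f image_f assms(1)
      finite_fibre])
  fix x assume "x \<in> S" "f x \<noteq> q"
  then have "branched_at S T f x 1"
    using branched_at_local_degree[of x] unbranched by simp
  then show "\<exists>U W g. openin (top_of_set S) U \<and> x \<in> U \<and> openin (top_of_set T) W \<and>
      homeomorphism U W f g"
    by (metis branched_at_1_local_homeomorphism)
qed

lemma critical_imp_degree_gt_1:
  assumes "p \<in> S" "1 < local_degree S T f p"
  shows "1 < branched_degree S T f"
proof -
  obtain y A where "y \<in> T" "y \<notin> N" "y \<noteq> f p"
    and A: "A \<subseteq> S \<inter> f -` {y}" "finite A" "card A = local_degree S T f p"
    by (rule branched_at_many_preimages[OF branched_at_local_degree[OF assms(1)] local_degree_pos[OF assms(1)]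
          openin_subtopology_self assms(1) finite_N])
  then have "card A \<le> card (S \<inter> f -` {y})"
    using finite_fibre by (intro card_mono)
  then show ?thesis
    using branched_degree_eq[of y] \<open>y \<in> T\<close> \<open>y \<notin> N\<close> A(3) assms(2) by simp
qed

lemma degree_gt_1_imp_critical:
  assumes "1 < branched_degree S T f"
  obtains p where "p \<in> S" "1 < local_degree S T f p"
proof -
  have "\<exists>p\<in>S. 1 < local_degree S T f p"
  proof (rule ccontr)
    assume "\<not> (\<exists>p\<in>S. 1 < local_degree S T f p)"
    then have unbranched: "local_degree S T f x = 1" if "x \<in> S" for x
      using local_degree_pos[OF that] that by fastforce
    obtain q where q: "q \<in> T - N"
      using exists_regular_value[of "{}"] by blast
    obtain y where y: "y \<in> T - N" "y \<noteq> q"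
      using exists_regular_value[of "{q}"] by blast
    have "inj_on f (S - f -` {q})"
      by (rule inj_on_off_fibre) (use q unbranched in auto)
    then have "inj_on f (S \<inter> f -` {y})"
      by (rule inj_on_subset) (use y in auto)
    then have "card (S \<inter> f -` {y}) \<le> 1"
      by (rule inj_on_vimage_singleton_card_le_1[of f _ y]) blast
    then show False
      using branched_degree_eq[OF y(1)] assms by simp
  qed
  then show ?thesis
    using that by blast
qed

lemma critical_imp_other_critical:
  assumes p: "p \<in> S" "1 < local_degree S T f p"
  obtains p' where "p' \<in> S" "p' \<noteq> p" "1 < local_degree S T f p'"
proof -
  have "\<exists>p'\<in>S. p' \<noteq> p \<and> 1 < local_degree S T f p'"
  proof (rule ccontr)
    assume "\<not> (\<exists>p'\<in>S. p' \<noteq> p \<and> 1 < local_degree S T f p')"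
    then have unbranched: "local_degree S T f x = 1" if "x \<in> S" "f x \<noteq> f p" for x
      using local_degree_pos[OF that(1)] that by fastforce
    have "f p \<in> T"
      using image_f p(1) by blast
    then have inj: "inj_on f (S - f -` {f p})"
      by (rule inj_on_off_fibre) (use unbranched in blast)
    obtain y A where "y \<in> T" "y \<notin> {}" "y \<noteq> f p"
      and A: "A \<subseteq> S \<inter> f -` {y}" "finite A" "card A = local_degree S T f p"
      by (rule branched_at_many_preimages[OF branched_at_local_degree[OF p(1)] local_degree_pos[OF p(1)]
            openin_subtopology_self p(1) finite.emptyI])
    have "inj_on f A"
      by (rule inj_on_subset[OF inj]) (use A(1) \<open>y \<noteq> f p\<close> in blast)
    then have "card A \<le> 1"
      by (rule inj_on_vimage_singleton_card_le_1[of f A y]) (use A(1) in blast)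
    then show False
      using A(3) p(2) by simp
  qed
  then show ?thesis
    using that by blast
qed

end

section \<open>Paths in graphs and trees\<close>

lemma graph_edgeE:
  assumes "graph V E" "e \<in> E" "u \<in> e"
  obtains w where "w \<noteq> u" "e = {u, w}" "u \<in> V" "w \<in> V"
proof -
  obtain a b where ab: "a \<noteq> b" "e = {a, b}" "a \<in> V" "b \<in> V"
    using assms(1,2) unfolding graph_def by blast
  show ?thesis
  proof (cases "u = a")
    case True
    show ?thesis
      by (rule that[of b]) (use ab True in auto)
  next
    case False
    then have "u = b"
      using ab(2) assms(3) by blast
    show ?thesis
      by (rule that[of a]) (use ab \<open>u = b\<close> in auto)
  qed
qed

lemma graph_finite_edges:
  assumes "graph V E"
  shows "finite E"
proof (rule finite_subset)
  show "E \<subseteq> Pow V"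
  proof
    fix e assume "e \<in> E"
    then obtain a b where "e = {a, b}" "a \<in> V" "b \<in> V"
      using assms unfolding graph_def by blast
    then show "e \<in> Pow V"
      by simp
  qed
  show "finite (Pow V)"
    using assms unfolding graph_def by simp
qed

lemma vpath_edge: "vpath E xs \<Longrightarrow> Suc i < length xs \<Longrightarrow> {xs ! i, xs ! Suc i} \<in> E"
  unfolding vpath_def by blast

lemma vpath_mono: "vpath E' xs \<Longrightarrow> E' \<subseteq> E \<Longrightarrow> vpath E xs"
  unfolding vpath_def by blast

lemma vpath_rev:
  assumes "vpath E xs"
  shows "vpath E (rev xs)"
  unfolding vpath_def
proof (intro conjI allI impI)
  show "rev xs \<noteq> []" "distinct (rev xs)"
    using assms unfolding vpath_def by auto
  fix i assume i: "Suc i < length (rev xs)"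
  define j where "j = length xs - Suc (Suc i)"
  have "Suc j < length xs" "rev xs ! i = xs ! Suc j" "rev xs ! Suc i = xs ! j"
    using i by (auto simp: rev_nth j_def Suc_diff_Suc)
  then show "{rev xs ! i, rev xs ! Suc i} \<in> E"
    using vpath_edge[OF assms, of j] by (simp add: insert_commute)
qed

lemma vpath_snoc:
  assumes "vpath E xs" "w \<notin> set xs" "{last xs, w} \<in> E"
  shows "vpath E (xs @ [w])"
  unfolding vpath_def
proof (intro conjI allI impI)
  show "xs @ [w] \<noteq> []" "distinct (xs @ [w])"
    using assms unfolding vpath_def by auto
  fix i assume i: "Suc i < length (xs @ [w])"
  show "{(xs @ [w]) ! i, (xs @ [w]) ! Suc i} \<in> E"
  proof (cases "Suc i < length xs")
    case True
    then show ?thesis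
      using vpath_edge[OF assms(1) True] by (simp add: nth_append)
  next
    case False
    then have i: "i = length xs - 1" "xs \<noteq> []"
      using i by auto
    then have "(xs @ [w]) ! i = last xs" "(xs @ [w]) ! Suc i = w"
      by (auto simp: nth_append last_conv_nth)
    then show ?thesis
      using assms(3) by simp
  qed
qed

lemma vpath_drop:
  assumes "vpath E xs" "j < length xs"
  shows "vpath E (drop j xs)"
  using assms unfolding vpath_def by auto

lemma vpath_hd_neq_last: "vpath E xs \<Longrightarrow> 2 \<le> length xs \<Longrightarrow> hd xs \<noteq> last xs"
  unfolding vpath_def by (auto simp: hd_conv_nth last_conv_nth nth_eq_iff_index_eq)

lemma vpath_vertex_in_edge:
  assumes "vpath E xs" "2 \<le> length xs" "x \<in> set xs"
  obtains e where "e \<in> E" "x \<in> e"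
proof -
  obtain k where k: "k < length xs" "xs ! k = x"
    using assms(3) by (meson in_set_conv_nth)
  show ?thesis
  proof (cases "Suc k < length xs")
    case True
    then show ?thesis
      using that vpath_edge[OF assms(1) True] k(2) by blast
  next
    case False
    then have "Suc (k - 1) = k" "Suc (k - 1) < length xs"
      using k(1) assms(2) by auto
    then have "{xs ! (k - 1), x} \<in> E"
      using vpath_edge[OF assms(1), of "k - 1"] k(2) by simp
    then show ?thesis
      using that by blast
  qed
qed

lemma vpath_subset_vertices:
  assumes "graph V E" "vpath E xs" "2 \<le> length xs"
  shows "set xs \<subseteq> V"
proof
  fix x assume "x \<in> set xs"
  then obtain e where "e \<in> E" "x \<in> e"
    using vpath_vertex_in_edge[OF assms(2,3)] by blast
  then show "x \<in> V"
    using graph_edgeE[OF assms(1)] by blast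
qed

lemma vpath_closed_set:
  assumes "vpath E xs" "hd xs \<in> A" and closed: "\<And>a e. a \<in> A \<Longrightarrow> e \<in> edges_at E a \<Longrightarrow> e \<subseteq> A"
  shows "set xs \<subseteq> A"
proof -
  have "xs ! i \<in> A" if "i < length xs" for i
    using that
  proof (induction i)
    case 0
    then show ?case
      using assms(2) by (simp add: hd_conv_nth)
  next
    case (Suc i)
    then have "xs ! i \<in> A"
      by simp
    moreover have "{xs ! i, xs ! Suc i} \<in> edges_at E (xs ! i)"
      using vpath_edge[OF assms(1) Suc.prems] by (simp add: edges_at_def)
    ultimately have "{xs ! i, xs ! Suc i} \<subseteq> A"
      by (rule closed)
    then show ?case
      by simp
  qed
  then show ?thesis
    by (auto simp: in_set_conv_nth)
qed

lemma leaf_edges_at: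
  assumes "y \<in> leaves V E"
  obtains e where "edges_at E y = {e}"
proof -
  have "card (edges_at E y) = 1"
    using assms unfolding leaves_def by simp
  then obtain e where "edges_at E y = {e}"
    by (rule card_1_singletonE)
  then show ?thesis
    by (rule that)
qed

lemma tree_leaf_neighbour_internal:
  assumes tree: "is_tree V E" and "3 \<le> card (leaves V E)"
    and y: "y \<in> leaves V E" and e: "{y, u} \<in> E"
  shows "u \<in> internal V E"
proof (rule ccontr)
  assume "u \<notin> internal V E"
  have g: "graph V E" and con: "graph_connected V E"
    using tree unfolding is_tree_def by blast+
  have "u \<in> V" "y \<in> V"
    using graph_edgeE[OF g e] by blast+
  then have "u \<in> leaves V E"
    using \<open>u \<notin> internal V E\<close> unfolding internal_def by blast
  \<comment> \<open>two adjacent leaves form a connected component, which must then be the whole tree\<close>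
  have "edges_at E a = {{y, u}}" if "a \<in> {y, u}" for a
    using that leaf_edges_at[OF y] leaf_edges_at[OF \<open>u \<in> leaves V E\<close>] e
    unfolding edges_at_def by (metis (no_types, lifting) insertE insert_iff mem_Collect_eq singletonD)
  then have closed: "e' \<subseteq> {y, u}" if "a \<in> {y, u}" "e' \<in> edges_at E a" for a e'
    using that by blast
  have "V \<subseteq> {y, u}"
  proof
    fix x assume "x \<in> V"
    then obtain xs where "path_between E y x xs"
      using con \<open>y \<in> V\<close> unfolding graph_connected_def by blast
    then have xs: "vpath E xs" "hd xs = y" "last xs = x" "xs \<noteq> []"
      unfolding path_between_def vpath_def by auto
    then have "set xs \<subseteq> {y, u}"
      using closed by (intro vpath_closed_set) auto
    moreover have "x \<in> set xs"
      using xs(3,4) last_in_set by blast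
    ultimately show "x \<in> {y, u}"
      by blast
  qed
  then have "card (leaves V E) \<le> card {y, u}"
    unfolding leaves_def by (intro card_mono) auto
  also have "\<dots> \<le> 2"
    by (simp add: card_insert_le_m1)
  finally show False
    using assms(2) by simp
qed

lemma tree_vpath_extend:
  assumes tree: "is_tree V E" and sub: "E' \<subseteq> E"
    and branch: "\<And>u e. u \<in> V \<Longrightarrow> u \<notin> leaves V E \<Longrightarrow> e \<in> E' \<Longrightarrow> u \<in> e \<Longrightarrow>
                   \<exists>e'\<in>E'. u \<in> e' \<and> e' \<noteq> e"
    and xs: "vpath E' xs" "2 \<le> length xs" and not_leaf: "last xs \<notin> leaves V E"
  obtains w where "vpath E' (xs @ [w])"
proof -
  have g: "graph V E" and acyclic: "\<not> has_cycle E"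
    using tree unfolding is_tree_def by blast+
  define n where "n = length xs"
  define u where "u = last xs"
  define a where "a = xs ! (n - 2)"
  have "xs \<noteq> []"
    using xs(2) by auto
  then have u: "u = xs ! (n - 1)" "Suc (n - 2) = n - 1"
    using xs(2) by (auto simp: u_def n_def last_conv_nth)
  have "{a, u} \<in> E'"
    using vpath_edge[OF xs(1), of "n - 2"] xs(2) u unfolding a_def n_def by simp
  moreover have "u \<in> V"
    using vpath_subset_vertices[OF g vpath_mono[OF xs(1) sub] xs(2)] xs(2) unfolding u_def
    by (metis last_in_set list.size(3) not_numeral_le_zero subsetD)
  ultimately obtain e' where e': "e' \<in> E'" "u \<in> e'" "e' \<noteq> {a, u}"
    using branch not_leaf unfolding u_def by blast
  then obtain w where w: "w \<noteq> u" "e' = {u, w}"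
    using graph_edgeE[OF g] sub by blast
  show ?thesis
  proof (cases "w \<in> set xs")
    case False
    then show ?thesis
      using that vpath_snoc[OF xs(1) False] e'(1) w(2) unfolding u_def by simp
  next
    case True
    \<comment> \<open>otherwise the path from w back to u closes a cycle with the edge {u, w}\<close>
    then obtain j where j: "j < n" "xs ! j = w"
      unfolding n_def by (meson in_set_conv_nth)
    have "j \<noteq> n - 1"
      using j w(1) u(1) by auto
    moreover have "j \<noteq> n - 2"
      using j(2) w(2) e'(3) unfolding a_def by (auto simp: insert_commute)
    ultimately have "3 \<le> length (drop j xs)"
      using j(1) unfolding n_def by simp
    moreover have "vpath E (drop j xs)"
      using vpath_drop[OF vpath_mono[OF xs(1) sub]] j(1) unfolding n_def by simp
    moreover have "{last (drop j xs), hd (drop j xs)} \<in> E"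
      using j e'(1) w(2) sub unfolding n_def u_def by (auto simp: hd_drop_conv_nth)
    ultimately show ?thesis
      using acyclic unfolding has_cycle_def by blast
  qed
qed

lemma tree_vpath_between_leaves:
  assumes tree: "is_tree V E" and sub: "E' \<subseteq> E"
    and branch: "\<And>u e. u \<in> V \<Longrightarrow> u \<notin> leaves V E \<Longrightarrow> e \<in> E' \<Longrightarrow> u \<in> e \<Longrightarrow>
                   \<exists>e'\<in>E'. u \<in> e' \<and> e' \<noteq> e"
    and start: "vpath E' xs0" "2 \<le> length xs0" "v \<in> set xs0"
  obtains xs where "vpath E' xs" "2 \<le> length xs" "v \<in> set xs"
    "hd xs \<in> leaves V E" "last xs \<in> leaves V E"
proof -
  have g: "graph V E"
    using tree unfolding is_tree_def by blast
  define P where "P ys \<longleftrightarrow> vpath E' ys \<and> 2 \<le> length ys \<and> v \<in> set ys" for ys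
  have bounded: "length ys < Suc (card V)" if "P ys" for ys
  proof -
    have "set ys \<subseteq> V" "distinct ys"
      using that vpath_subset_vertices[OF g vpath_mono[OF _ sub]] unfolding P_def vpath_def by auto
    then have "length ys \<le> card V"
      using g card_mono distinct_card unfolding graph_def by metis
    then show ?thesis
      by simp
  qed
  \<comment> \<open>a longest such path cannot be extended, so both its ends are leaves\<close>
  have "P xs0"
    using start unfolding P_def by blast
  then obtain xs where xs: "P xs" and longest: "\<And>ys. P ys \<Longrightarrow> length ys \<le> length xs"
    using ex_has_greatest_nat[of P xs0 length "Suc (card V)"] bounded by blast
  have leaf: "last ys \<in> leaves V E" if "P ys" "length ys = length xs" for ys
  proof (rule ccontr)
    assume not_leaf: "last ys \<notin> leaves V E"
    have "vpath E' ys" "2 \<le> length ys"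
      using that(1) unfolding P_def by auto
    obtain w where "vpath E' (ys @ [w])"
    proof (rule tree_vpath_extend[OF tree sub _ \<open>vpath E' ys\<close> \<open>2 \<le> length ys\<close> not_leaf])
      show "\<exists>e'\<in>E'. u \<in> e' \<and> e' \<noteq> e"
        if "u \<in> V" "u \<notin> leaves V E" "e \<in> E'" "u \<in> e" for u e
        using branch[OF that] .
    qed
    then have "P (ys @ [w])"
      using that(1) unfolding P_def by simp
    then show False
      using longest that(2) by fastforce
  qed
  have "P (rev xs)"
    using xs(1) vpath_rev unfolding P_def by auto
  then have "hd xs \<in> leaves V E"
    using leaf[of "rev xs"] xs by (simp add: last_rev)
  then show ?thesis
    using that leaf[OF xs] xs unfolding P_def by blast
qed

section \<open>Covers of trees of spheres\<close>

lemma tree_of_spheres_sphere_at: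
  assumes "tree_of_spheres V E X S i" "u \<in> internal V E"
  shows "S u homeomorphic sphere (0::real^3) 1" "finite (marked E i u)" "marked E i u \<subseteq> S u"
proof -
  show "S u homeomorphic sphere (0::real^3) 1" "marked E i u \<subseteq> S u"
    using assms unfolding tree_of_spheres_def marked_def by (elim conjE; blast)+
  have "finite E"
    using assms(1) graph_finite_edges unfolding tree_of_spheres_def is_tree_def by blast
  then show "finite (marked E i u)"
    unfolding marked_def edges_at_def by simp
qed

locale tree_cover =
  fixes VY :: "'v set" and EY :: "'v set set" and Y :: "'v set"
    and SY :: "'v \<Rightarrow> (real^3) set" and iY :: "'v \<Rightarrow> 'v set \<Rightarrow> real^3"
    and VZ :: "'w set" and EZ :: "'w set set" and Z :: "'w set"
    and SZ :: "'w \<Rightarrow> (real^3) set" and iZ :: "'w \<Rightarrow> 'w set \<Rightarrow> real^3"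
    and F :: "'v \<Rightarrow> 'w" and f :: "'v \<Rightarrow> real^3 \<Rightarrow> real^3"
  assumes cover: "is_cover VY EY Y SY iY VZ EZ Z SZ iZ F f"
begin

definition edge_degree :: "'v \<Rightarrow> 'v set \<Rightarrow> nat" where
  "edge_degree u e = local_degree (SY u) (SZ (F u)) (f u) (iY u e)"

definition critical_edges :: "'v set set" where
  "critical_edges = {e \<in> EY. \<exists>u\<in>e. u \<in> internal VY EY \<and> 1 < edge_degree u e}"

lemma trees_of_spheres: "tree_of_spheres VY EY Y SY iY" "tree_of_spheres VZ EZ Z SZ iZ"
  using cover unfolding is_cover_def by simp_all

lemma tree: "is_tree VY EY" and leaves_eq: "leaves VY EY = Y" and three_leaves: "3 \<le> card Y"
  using trees_of_spheres(1) unfolding tree_of_spheres_def by simp_all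

lemma graph: "graph VY EY"
  using tree unfolding is_tree_def by (elim conjE)

lemma edge_image: "{a, b} \<in> EY \<Longrightarrow> {F a, F b} \<in> EZ"
  using cover unfolding is_cover_def by (elim conjE) blast

lemma internal_image: "u \<in> internal VY EY \<Longrightarrow> F u \<in> internal VZ EZ"
  using cover unfolding is_cover_def by (elim conjE) blast

lemma local_map:
  assumes "u \<in> internal VY EY"
  shows "branched_covering (SY u) (SZ (F u)) (f u)"
    "covering_space (SY u - marked EY iY u) (f u) (SZ (F u) - marked EZ iZ (F u))"
    "\<And>e. e \<in> edges_at EY u \<Longrightarrow> f u (iY u e) = iZ (F u) (F ` e)"
  using cover assms unfolding is_cover_def by (elim conjE; blast)+

lemma edge_degree_eq:
  assumes "{u, w} \<in> EY" "u \<in> internal VY EY" "w \<in> internal VY EY"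
  shows "edge_degree u {u, w} = edge_degree w {u, w}"
proof -
  have "\<forall>v1 v2. {v1, v2} \<in> EY \<and> v1 \<in> internal VY EY \<and> v2 \<in> internal VY EY \<longrightarrow>
      local_degree (SY v1) (SZ (F v1)) (f v1) (iY v1 {v1, v2}) =
      local_degree (SY v2) (SZ (F v2)) (f v2) (iY v2 {v1, v2})"
    using cover unfolding is_cover_def by (elim conjE)
  then have "{u, w} \<in> EY \<and> u \<in> internal VY EY \<and> w \<in> internal VY EY \<longrightarrow>
      local_degree (SY u) (SZ (F u)) (f u) (iY u {u, w}) =
      local_degree (SY w) (SZ (F w)) (f w) (iY w {u, w})"
    by (elim allE)
  then show ?thesis
    unfolding edge_degree_def using assms by blast
qed

lemma marked_branched_cover_at:
  assumes u: "u \<in> internal VY EY"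
  shows "marked_branched_cover (SY u) (SZ (F u)) (f u) (marked EY iY u) (marked EZ iZ (F u))"
proof -
  have tZ: "is_tree VZ EZ"
    using trees_of_spheres(2) unfolding tree_of_spheres_def by (elim conjE)
  have "f u ` marked EY iY u \<subseteq> marked EZ iZ (F u)"
  proof
    fix x assume "x \<in> f u ` marked EY iY u"
    then obtain e where e: "e \<in> edges_at EY u" "x = f u (iY u e)"
      unfolding marked_def by blast
    then obtain w where "e = {u, w}" "e \<in> EY"
      using graph_edgeE[OF graph] unfolding edges_at_def by blast
    then have "F ` e \<in> edges_at EZ (F u)"
      using edge_image unfolding edges_at_def by simp
    then show "x \<in> marked EZ iZ (F u)"
      using local_map(3)[OF u e(1)] e(2) unfolding marked_def by simp
  qed
  then show ?thesis
    unfolding marked_branched_cover_def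
    using tree_of_spheres_sphere_at[OF trees_of_spheres(1) u] tree_of_spheres_sphere_at[OF trees_of_spheres(2) internal_image[OF u]]
      local_map(1,2)[OF u] by blast
qed


lemma cover_vdeg_internal:
  "u \<in> internal VY EY \<Longrightarrow> cover_vdeg VY EY SY iY SZ F f u = branched_degree (SY u) (SZ (F u)) (f u)"
  unfolding cover_vdeg_def by simp

lemma cover_vdeg_leaf:
  assumes "y \<notin> internal VY EY" "edges_at EY y = {e}" "e = {y, u}" "u \<noteq> y"
  shows "cover_vdeg VY EY SY iY SZ F f y = edge_degree u e"
proof -
  have "(THE e'. e' \<in> edges_at EY y) = e"
    using assms(2) by simp
  moreover have "(THE u'. u' \<in> e \<and> u' \<noteq> y) = u"
    using assms(3,4) by (intro the_equality) auto
  ultimately show ?thesis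
    unfolding cover_vdeg_def edge_degree_def using assms(1) by (simp add: Let_def)
qed

lemma critical_edge_degree:
  assumes "e \<in> critical_edges" "u \<in> e" "u \<in> internal VY EY"
  shows "1 < edge_degree u e"
proof -
  obtain z where e: "e \<in> EY" and z: "z \<in> e" "z \<in> internal VY EY" "1 < edge_degree z e"
    using assms(1) unfolding critical_edges_def by blast
  obtain w where w: "w \<noteq> u" "e = {u, w}"
    using graph_edgeE[OF graph e assms(2)] by blast
  show ?thesis
  proof (cases "z = u")
    case False
    then have "z = w"
      using z(1) w(2) by blast
    then show ?thesis
      using edge_degree_eq[of u w] e assms(3) z w(2) by simp
  qed (use z in simp)
qed

lemma critical_edge_vertex:
  assumes "e \<in> critical_edges" "x \<in> e"
  shows "1 < cover_vdeg VY EY SY iY SZ F f x"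
proof (cases "x \<in> internal VY EY")
  case True
  interpret marked_branched_cover "SY x" "SZ (F x)" "f x" "marked EY iY x" "marked EZ iZ (F x)"
    by (rule marked_branched_cover_at[OF True])
  have "iY x e \<in> SY x"
    using marked_subset assms unfolding marked_def edges_at_def critical_edges_def by blast
  then show ?thesis
    using critical_imp_degree_gt_1 critical_edge_degree[OF assms True]
    unfolding cover_vdeg_internal[OF True] edge_degree_def by blast
next
  case False
  have "e \<in> EY"
    using assms(1) unfolding critical_edges_def by blast
  obtain w where w: "w \<noteq> x" "e = {x, w}" "x \<in> VY"
    using graph_edgeE[OF graph \<open>e \<in> EY\<close> assms(2)] by blast
  then have "x \<in> leaves VY EY"
    using False unfolding internal_def by blast
  then obtain e0 where "edges_at EY x = {e0}"
    by (rule leaf_edges_at)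
  moreover have "e \<in> edges_at EY x"
    using \<open>e \<in> EY\<close> assms(2) unfolding edges_at_def by blast
  ultimately have "edges_at EY x = {e}"
    by blast
  then have "cover_vdeg VY EY SY iY SZ F f x = edge_degree w e"
    using cover_vdeg_leaf[OF False _ w(2,1)] by blast
  moreover obtain z where "z \<in> e" "z \<in> internal VY EY" "1 < edge_degree z e"
    using assms(1) unfolding critical_edges_def by blast
  moreover have "z = w"
    using calculation(2,3) False w(2) by blast
  ultimately show ?thesis
    by simp
qed

lemma critical_vertex_on_critical_edge:
  assumes "v \<in> VY" "1 < cover_vdeg VY EY SY iY SZ F f v"
  obtains e where "e \<in> critical_edges" "v \<in> e"
proof (cases "v \<in> internal VY EY")
  case True
  interpret marked_branched_cover "SY v" "SZ (F v)" "f v" "marked EY iY v" "marked EZ iZ (F v)"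
    by (rule marked_branched_cover_at[OF True])
  obtain p where "p \<in> SY v" "1 < local_degree (SY v) (SZ (F v)) (f v) p"
    using degree_gt_1_imp_critical assms(2) unfolding cover_vdeg_internal[OF True] by blast
  moreover from this have "p \<in> marked EY iY v"
    by (rule critical_imp_marked)
  ultimately obtain e where "e \<in> edges_at EY v" "1 < edge_degree v e"
    unfolding marked_def edge_degree_def by blast
  then show ?thesis
    using that True unfolding critical_edges_def edges_at_def by blast
next
  case False
  then have leaf: "v \<in> leaves VY EY"
    using assms(1) unfolding internal_def by blast
  then obtain e where e: "edges_at EY v = {e}"
    by (rule leaf_edges_at)
  then have "e \<in> EY" "v \<in> e"
    unfolding edges_at_def by auto
  then obtain w where w: "w \<noteq> v" "e = {v, w}"
    using graph_edgeE[OF graph] by blast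
  have "w \<in> internal VY EY"
    using tree_leaf_neighbour_internal[OF tree _ leaf] three_leaves leaves_eq \<open>e \<in> EY\<close> w(2) by simp
  moreover have "1 < edge_degree w e"
    using cover_vdeg_leaf[OF False e w(2,1)] assms(2) by simp
  ultimately show ?thesis
    using that \<open>e \<in> EY\<close> \<open>v \<in> e\<close> w(2) unfolding critical_edges_def by blast
qed

lemma critical_edge_branches:
  assumes "u \<in> VY" "u \<notin> leaves VY EY" "e \<in> critical_edges" "u \<in> e"
  shows "\<exists>e'\<in>critical_edges. u \<in> e' \<and> e' \<noteq> e"
proof -
  have u: "u \<in> internal VY EY"
    using assms(1,2) unfolding internal_def by blast
  interpret marked_branched_cover "SY u" "SZ (F u)" "f u" "marked EY iY u" "marked EZ iZ (F u)"
    by (rule marked_branched_cover_at[OF u])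
  have "iY u e \<in> SY u"
    using marked_subset assms(3,4) unfolding marked_def edges_at_def critical_edges_def by blast
  moreover have "1 < local_degree (SY u) (SZ (F u)) (f u) (iY u e)"
    using critical_edge_degree[OF assms(3,4) u] unfolding edge_degree_def .
  ultimately obtain p where p: "p \<in> SY u" "p \<noteq> iY u e" "1 < local_degree (SY u) (SZ (F u)) (f u) p"
    by (rule critical_imp_other_critical)
  then have "p \<in> marked EY iY u"
    by (intro critical_imp_marked)
  then obtain e' where "e' \<in> edges_at EY u" "p = iY u e'"
    unfolding marked_def by blast
  then show ?thesis
    using p u unfolding critical_edges_def edge_degree_def edges_at_def by blast
qed

end


theorem lemma2p21:
  fixes VY :: "'v set" and EY :: "'v set set" and Y :: "'v set"
    and SY :: "'v \<Rightarrow> (real^3) set" and iY :: "'v \<Rightarrow> 'v set \<Rightarrow> real^3"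
    and VZ :: "'w set" and EZ :: "'w set set" and Z :: "'w set"
    and SZ :: "'w \<Rightarrow> (real^3) set" and iZ :: "'w \<Rightarrow> 'w set \<Rightarrow> real^3"
    and F :: "'v \<Rightarrow> 'w" and f :: "'v \<Rightarrow> real^3 \<Rightarrow> real^3"
  assumes "is_cover VY EY Y SY iY VZ EZ Z SZ iZ F f"
    and "v \<in> VY" and "1 < cover_vdeg VY EY SY iY SZ F f v"
  shows "\<exists>y1\<in>Y. \<exists>y2\<in>Y. y1 \<noteq> y2 \<and>
           1 < cover_vdeg VY EY SY iY SZ F f y1 \<and> 1 < cover_vdeg VY EY SY iY SZ F f y2 \<and>
           (\<exists>xs. path_between EY y1 y2 xs \<and> v \<in> set xs \<and>
                 (\<forall>u\<in>set xs. 1 < cover_vdeg VY EY SY iY SZ F f u))"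
proof -
  interpret tree_cover VY EY Y SY iY VZ EZ Z SZ iZ F f
    by (rule tree_cover.intro) (rule assms(1))
  obtain e where e: "e \<in> critical_edges" "v \<in> e"
    using critical_vertex_on_critical_edge[OF assms(2,3)] by blast
  then obtain w where "w \<noteq> v" "e = {v, w}"
    using graph_edgeE[OF graph] unfolding critical_edges_def by blast
  then have "vpath critical_edges [v, w]"
    using e unfolding vpath_def by (auto simp: less_Suc_eq)
  then obtain xs where xs: "vpath critical_edges xs" "2 \<le> length xs" "v \<in> set xs"
    and ends: "hd xs \<in> Y" "last xs \<in> Y"
    using tree_vpath_between_leaves[OF tree _ critical_edge_branches, of "[v, w]" v]
    unfolding critical_edges_def leaves_eq by auto
  have critical: "1 < cover_vdeg VY EY SY iY SZ F f u" if "u \<in> set xs" for u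
    using vpath_vertex_in_edge[OF xs(1,2) that] critical_edge_vertex by blast
  have "path_between EY (hd xs) (last xs) xs"
    using vpath_mono[OF xs(1)] unfolding path_between_def critical_edges_def by blast
  then show ?thesis
    using ends vpath_hd_neq_last[OF xs(1,2)] xs(3) critical
    by (metis hd_in_set last_in_set vpath_def xs(1))
qed

end
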